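(* Let $n\ge2$, let $f:2^{[n]}\to\mathbb{R}_+$ be monotone submodular, and let $\mathbf{x}\in[0,1]^n$ with $0\le x_1\le x_2\le\dots\le x_n\le1$. If either (i) $\sum_{i=1}^{n-1}x_i\le1$ and $x_n\le1/4$, or (ii) $\sum_{i=2}^{n}x_i\ge n-2$ and $x_1\ge3/4$, then $f^{+}(\mathbf{x})/f^{++}(\mathbf{x})\le4/3$ (with the convention $0/0=1$).
   Context: $[n]=\{1,\dots,n\}$. A set function $f:2^{[n]}\to\mathbb{R}_+$ is monotone if $f(S)\le f(T)$ for $S\subseteq T$, submodular if $f(S)+f(T)\ge f(S\cap T)+f(S\cup T)$. For $\mathbf{x}\in[0,1]^n$: the concave closure $f^{+}(\mathbf{x})=\max\sum_{S\subseteq[n]}\theta(S)f(S)$ over $\theta:2^{[n]}\to\mathbb{R}_{\ge0}$ with $\sum_S\theta(S)=1$ and $\sum_{S\ni i}\theta(S)=x_i$ for all $i$; the upper pairwise independent extension $f^{++}(\mathbf{x})$ is the same maximum with the additional constraints $\sum_{S\ni i,j}\theta(S)=x_ix_j$ for all $i<j$. *)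

theory Defs
  imports Complex_Main
begin

text \<open>Ground set [n] = {1..n}; set functions are f :: nat set => real, considered on Pow {1..n}.\<close>

definition monotone_setfun :: "nat \<Rightarrow> (nat set \<Rightarrow> real) \<Rightarrow> bool" where
  "monotone_setfun n f \<longleftrightarrow>
     (\<forall>S T. S \<subseteq> T \<and> T \<subseteq> {1..n} \<longrightarrow> f S \<le> f T)"

definition submodular_setfun :: "nat \<Rightarrow> (nat set \<Rightarrow> real) \<Rightarrow> bool" where
  "submodular_setfun n f \<longleftrightarrow>
     (\<forall>S T. S \<subseteq> {1..n} \<and> T \<subseteq> {1..n} \<longrightarrow> f S + f T \<ge> f (S \<inter> T) + f (S \<union> T))"

definition nonneg_setfun :: "nat \<Rightarrow> (nat set \<Rightarrow> real) \<Rightarrow> bool" where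
  "nonneg_setfun n f \<longleftrightarrow> (\<forall>S. S \<subseteq> {1..n} \<longrightarrow> f S \<ge> 0)"

definition concave_feasible :: "nat \<Rightarrow> (nat \<Rightarrow> real) \<Rightarrow> (nat set \<Rightarrow> real) \<Rightarrow> bool" where
  "concave_feasible n x \<theta> \<longleftrightarrow>
     (\<forall>S \<in> Pow {1..n}. \<theta> S \<ge> 0) \<and>
     (\<Sum>S \<in> Pow {1..n}. \<theta> S) = 1 \<and>
     (\<forall>i \<in> {1..n}. (\<Sum>S \<in> {S \<in> Pow {1..n}. i \<in> S}. \<theta> S) = x i)"

definition pairwise_feasible :: "nat \<Rightarrow> (nat \<Rightarrow> real) \<Rightarrow> (nat set \<Rightarrow> real) \<Rightarrow> bool" where
  "pairwise_feasible n x \<theta> \<longleftrightarrow>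
     concave_feasible n x \<theta> \<and>
     (\<forall>i \<in> {1..n}. \<forall>j \<in> {1..n}. i < j \<longrightarrow>
        (\<Sum>S \<in> {S \<in> Pow {1..n}. i \<in> S \<and> j \<in> S}. \<theta> S) = x i * x j)"

text \<open>The maxima are taken as suprema of the (compact, nonempty) feasible value sets.\<close>
definition concave_closure :: "nat \<Rightarrow> (nat set \<Rightarrow> real) \<Rightarrow> (nat \<Rightarrow> real) \<Rightarrow> real" where
  "concave_closure n f x =
     Sup {(\<Sum>S \<in> Pow {1..n}. \<theta> S * f S) | \<theta>. concave_feasible n x \<theta>}"

definition upper_pairwise_ext :: "nat \<Rightarrow> (nat set \<Rightarrow> real) \<Rightarrow> (nat \<Rightarrow> real) \<Rightarrow> real" where
  "upper_pairwise_ext n f x =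
     Sup {(\<Sum>S \<in> Pow {1..n}. \<theta> S * f S) | \<theta>. pairwise_feasible n x \<theta>}"

end

theory Submission
  imports Defs
begin

text \<open>
  Let \<open>b\<close> be the largest marginal and suppose \<open>b \<le> 1/4\<close> and \<open>\<Sum>i x\<^sub>i \<le> 1 + b\<close>. The
  distribution that, with probability \<open>b\<^sup>2\<close>, draws every \<open>i\<close> independently with probability
  \<open>x\<^sub>i/b\<close>, with probability \<open>(1 - b) x\<^sub>i\<close> is the singleton \<open>{i}\<close>, and is empty otherwise,
  is pairwise independent with marginals \<open>x\<close>. Against it, every distribution with marginals
  \<open>x\<close> gains at most \<open>D = \<Sum>i x\<^sub>i (f{i} - f{})\<close> over \<open>f{}\<close> by submodularity, while the mixture
  gains at least \<open>(1 - b) D\<close>; so the ratio is at most \<open>1/(1 - b) \<le> 4/3\<close>.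
  Case (i) is exactly this situation. Case (ii) reduces to the same construction after passing
  to complements: \<open>S \<mapsto> f([n] - S)\<close> is submodular and antitone, the marginals become
  \<open>1 - x\<^sub>i\<close>, and both extensions are invariant under this transformation. There \<open>D\<close> is
  negative, but at least \<open>-f([n])\<close> by submodularity, which again yields the factor \<open>4/3\<close>.
\<close>

abbreviation expected_value :: "nat \<Rightarrow> (nat set \<Rightarrow> real) \<Rightarrow> (nat set \<Rightarrow> real) \<Rightarrow> real" where
  "expected_value n \<theta> f \<equiv> \<Sum>S\<in>Pow {1..n}. \<theta> S * f S"

definition ratio_certificate ::
    "nat \<Rightarrow> (nat set \<Rightarrow> real) \<Rightarrow> (nat \<Rightarrow> real) \<Rightarrow> (nat set \<Rightarrow> real) \<Rightarrow> bool" where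
  "ratio_certificate n f x \<theta>' \<longleftrightarrow> pairwise_feasible n x \<theta>' \<and>
     (\<forall>\<theta>. concave_feasible n x \<theta> \<longrightarrow> expected_value n \<theta> f \<le> 4/3 * expected_value n \<theta>' f)"

lemma ratio_bound_of_certificate:
  assumes nonneg: "nonneg_setfun n f" and cert: "ratio_certificate n f x \<theta>'"
  shows "(upper_pairwise_ext n f x = 0 \<longrightarrow> concave_closure n f x = 0) \<and>
         (upper_pairwise_ext n f x \<noteq> 0 \<longrightarrow>
            concave_closure n f x / upper_pairwise_ext n f x \<le> 4/3)"
proof -
  define A where "A = {expected_value n \<theta> f | \<theta>. concave_feasible n x \<theta>}"
  define B where "B = {expected_value n \<theta> f | \<theta>. pairwise_feasible n x \<theta>}"
  define v where "v = expected_value n \<theta>' f"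
  have f_nonneg: "f S \<ge> 0" if "S \<in> Pow {1..n}" for S
    using nonneg that unfolding nonneg_setfun_def by auto
  have bounded: "expected_value n \<theta> f \<le> (\<Sum>S\<in>Pow {1..n}. f S)" if "concave_feasible n x \<theta>" for \<theta>
  proof (rule sum_mono)
    fix S assume S: "S \<in> Pow {1..n}"
    have \<theta>_nonneg: "\<forall>S\<in>Pow {1..n}. \<theta> S \<ge> 0" and "sum \<theta> (Pow {1..n}) = 1"
      using that unfolding concave_feasible_def by auto
    moreover have "\<theta> S \<le> sum \<theta> (Pow {1..n})"
      by (rule member_le_sum) (use S \<theta>_nonneg in auto)
    ultimately show "\<theta> S * f S \<le> f S"
      using S f_nonneg[OF S] by (intro mult_left_le_one_le) auto
  qed
  have feasible': "concave_feasible n x \<theta>'" "pairwise_feasible n x \<theta>'"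
    using cert unfolding ratio_certificate_def pairwise_feasible_def by auto
  have "v \<in> A" "v \<in> B" unfolding A_def B_def v_def using feasible' by blast+
  moreover have "bdd_above A" "bdd_above B"
    unfolding A_def B_def bdd_above_def pairwise_feasible_def using bounded by blast+
  moreover have "v \<ge> 0" unfolding v_def
    using feasible'(1) f_nonneg unfolding concave_feasible_def by (intro sum_nonneg mult_nonneg_nonneg) auto
  moreover have "Sup A \<le> 4/3 * v"
    by (rule cSup_least) (use \<open>v \<in> A\<close> cert in \<open>auto simp: A_def v_def ratio_certificate_def\<close>)
  ultimately have "0 \<le> Sup A" "Sup A \<le> 4/3 * Sup B" "0 \<le> Sup B"
    using cSup_upper[of v A] cSup_upper[of v B] by auto
  moreover have "concave_closure n f x = Sup A" "upper_pairwise_ext n f x = Sup B"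
    unfolding concave_closure_def upper_pairwise_ext_def A_def B_def by auto
  ultimately show ?thesis by (auto simp: divide_le_eq)
qed

lemma submodular_setfunD:
  assumes "submodular_setfun n f" "S \<subseteq> {1..n}" "T \<subseteq> {1..n}"
  shows "f (S \<inter> T) + f (S \<union> T) \<le> f S + f T"
  using assms unfolding submodular_setfun_def by blast

lemma submodular_le_sum_singletons:
  assumes "submodular_setfun n f" "S \<subseteq> {1..n}"
  shows "f S \<le> f {} + (\<Sum>i\<in>S. f {i} - f {})"
proof -
  have "finite S" using assms(2) finite_subset by blast
  then show ?thesis using assms(2)
  proof (induction S rule: finite_induct)
    case (insert a S)
    then have "f (S \<inter> {a}) + f (S \<union> {a}) \<le> f S + f {a}"
      by (intro submodular_setfunD[OF assms(1)]) auto
    moreover have "S \<inter> {a} = {}" "S \<union> {a} = insert a S" using insert.hyps by auto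
    ultimately show ?case using insert by simp
  qed simp
qed

lemma expected_value_le_singleton_bound:
  assumes "submodular_setfun n f" and feasible: "concave_feasible n x \<theta>"
  shows "expected_value n \<theta> f \<le> f {} + (\<Sum>i\<in>{1..n}. x i * (f {i} - f {}))"
proof -
  let ?N = "{1..n}"
  have \<theta>_nonneg: "\<forall>S\<in>Pow ?N. \<theta> S \<ge> 0" and \<theta>_total: "sum \<theta> (Pow ?N) = 1"
    and marginal: "\<And>i. i \<in> ?N \<Longrightarrow> sum \<theta> {S\<in>Pow ?N. i \<in> S} = x i"
    using feasible unfolding concave_feasible_def by auto
  have "expected_value n \<theta> f \<le> (\<Sum>S\<in>Pow ?N. \<theta> S * (f {} + (\<Sum>i\<in>{i\<in>?N. i \<in> S}. f {i} - f {})))"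
  proof (rule sum_mono)
    fix S assume S: "S \<in> Pow ?N"
    then have "{i\<in>?N. i \<in> S} = S" by auto
    then show "\<theta> S * f S \<le> \<theta> S * (f {} + (\<Sum>i\<in>{i\<in>?N. i \<in> S}. f {i} - f {}))"
      using submodular_le_sum_singletons[OF assms(1), of S] \<theta>_nonneg S
      by (intro mult_left_mono) auto
  qed
  also have "\<dots> = sum \<theta> (Pow ?N) * f {} + (\<Sum>S\<in>Pow ?N. \<Sum>i\<in>{i\<in>?N. i \<in> S}. \<theta> S * (f {i} - f {}))"
    by (simp add: distrib_left sum.distrib sum_distrib_left sum_distrib_right)
  also have "\<dots> = sum \<theta> (Pow ?N) * f {} + (\<Sum>i\<in>?N. (f {i} - f {}) * sum \<theta> {S\<in>Pow ?N. i \<in> S})"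
    by (subst sum.swap_restrict) (simp_all add: sum_distrib_left mult.commute)
  also have "\<dots> = f {} + (\<Sum>i\<in>?N. x i * (f {i} - f {}))"
    using \<theta>_total marginal by (simp add: mult.commute)
  finally show ?thesis .
qed

lemma sum_Pow_complement:
  fixes N :: "'a set" and \<theta> :: "'a set \<Rightarrow> 'b::comm_monoid_add"
  shows "(\<Sum>S\<in>Pow N. \<theta> (N - S)) = sum \<theta> (Pow N)"
  by (rule sum.reindex_bij_witness[where i = "\<lambda>C. N - C" and j = "\<lambda>S. N - S"]) auto

lemma sum_filter_Pow_complement:
  fixes N :: "'a set" and \<theta> :: "'a set \<Rightarrow> 'b::comm_monoid_add"
  shows "(\<Sum>S\<in>{S\<in>Pow N. P S}. \<theta> (N - S)) = sum \<theta> {C\<in>Pow N. P (N - C)}"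
  by (rule sum.reindex_bij_witness[where i = "\<lambda>C. N - C" and j = "\<lambda>S. N - S"])
    (auto simp: double_diff)

lemma sum_filter_Pow_not_mem:
  fixes N :: "'a set" and \<theta> :: "'a set \<Rightarrow> 'b::ab_group_add"
  assumes "finite N"
  shows "sum \<theta> {C\<in>Pow N. i \<notin> C} = sum \<theta> (Pow N) - sum \<theta> {C\<in>Pow N. i \<in> C}"
proof -
  have "sum \<theta> {C\<in>Pow N. i \<notin> C} = sum \<theta> (Pow N - {C\<in>Pow N. i \<in> C})"
    by (intro arg_cong[where f = "sum \<theta>"]) auto
  also have "\<dots> = sum \<theta> (Pow N) - sum \<theta> {C\<in>Pow N. i \<in> C}"
    by (rule sum_diff) (use assms in auto)
  finally show ?thesis .
qed

lemma sum_filter_Pow_not_mem_pair: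
  fixes N :: "'a set" and \<theta> :: "'a set \<Rightarrow> 'b::ab_group_add"
  assumes "finite N"
  shows "sum \<theta> {C\<in>Pow N. i \<notin> C \<and> j \<notin> C} = sum \<theta> (Pow N)
    - sum \<theta> {C\<in>Pow N. i \<in> C} - sum \<theta> {C\<in>Pow N. j \<in> C} + sum \<theta> {C\<in>Pow N. i \<in> C \<and> j \<in> C}"
proof -
  let ?I = "{C\<in>Pow N. i \<in> C}" and ?J = "{C\<in>Pow N. j \<in> C}"
  have "sum \<theta> {C\<in>Pow N. i \<notin> C \<and> j \<notin> C} = sum \<theta> (Pow N - (?I \<union> ?J))"
    by (intro arg_cong[where f = "sum \<theta>"]) auto
  also have "\<dots> = sum \<theta> (Pow N) - sum \<theta> (?I \<union> ?J)"
    by (rule sum_diff) (use assms in auto)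
  also have "sum \<theta> (?I \<union> ?J) = sum \<theta> ?I + sum \<theta> ?J - sum \<theta> (?I \<inter> ?J)"
    by (rule sum_Un) (use assms in auto)
  also have "?I \<inter> ?J = {C\<in>Pow N. i \<in> C \<and> j \<in> C}" by auto
  finally show ?thesis by simp
qed

lemma concave_feasible_complement:
  assumes feasible: "concave_feasible n (\<lambda>i. 1 - x i) \<theta>"
  shows "concave_feasible n x (\<lambda>S. \<theta> ({1..n} - S))"
proof -
  let ?N = "{1..n}"
  have total: "sum \<theta> (Pow ?N) = 1"
    and marginal: "\<And>i. i \<in> ?N \<Longrightarrow> sum \<theta> {C\<in>Pow ?N. i \<in> C} = 1 - x i"
    using feasible unfolding concave_feasible_def by auto
  have "sum (\<lambda>S. \<theta> (?N - S)) {S\<in>Pow ?N. i \<in> S} = x i" if i: "i \<in> ?N" for i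
  proof -
    have "sum (\<lambda>S. \<theta> (?N - S)) {S\<in>Pow ?N. i \<in> S} = sum \<theta> {C\<in>Pow ?N. i \<in> ?N - C}"
      by (rule sum_filter_Pow_complement)
    also have "\<dots> = sum \<theta> {C\<in>Pow ?N. i \<notin> C}"
      using i by (intro arg_cong[where f = "sum \<theta>"]) auto
    also have "\<dots> = x i"
      using sum_filter_Pow_not_mem[of ?N \<theta> i] total marginal[OF i] by simp
    finally show ?thesis .
  qed
  then show ?thesis
    using feasible sum_Pow_complement[where N = ?N and \<theta> = \<theta>] unfolding concave_feasible_def by auto
qed

lemma pairwise_feasible_complement:
  assumes feasible: "pairwise_feasible n (\<lambda>i. 1 - x i) \<theta>"
  shows "pairwise_feasible n x (\<lambda>S. \<theta> ({1..n} - S))"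
  unfolding pairwise_feasible_def
proof (intro conjI ballI impI)
  let ?N = "{1..n}"
  show "concave_feasible n x (\<lambda>S. \<theta> (?N - S))"
    using feasible unfolding pairwise_feasible_def by (intro concave_feasible_complement) simp
  fix i j assume ij: "i \<in> ?N" "j \<in> ?N" "i < j"
  have concave: "concave_feasible n (\<lambda>i. 1 - x i) \<theta>"
    and pair: "sum \<theta> {C\<in>Pow ?N. i \<in> C \<and> j \<in> C} = (1 - x i) * (1 - x j)"
    using feasible ij unfolding pairwise_feasible_def by blast+
  have "sum \<theta> (Pow ?N) = 1" "sum \<theta> {C\<in>Pow ?N. i \<in> C} = 1 - x i"
    "sum \<theta> {C\<in>Pow ?N. j \<in> C} = 1 - x j"
    using concave ij unfolding concave_feasible_def by blast+
  note moments = this pair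
  have "sum (\<lambda>S. \<theta> (?N - S)) {S\<in>Pow ?N. i \<in> S \<and> j \<in> S} = sum \<theta> {C\<in>Pow ?N. i \<in> ?N - C \<and> j \<in> ?N - C}"
    by (rule sum_filter_Pow_complement)
  also have "\<dots> = sum \<theta> {C\<in>Pow ?N. i \<notin> C \<and> j \<notin> C}"
    using ij by (intro arg_cong[where f = "sum \<theta>"]) auto
  also have "\<dots> = x i * x j"
    using sum_filter_Pow_not_mem_pair[of ?N \<theta> i j] moments by (simp add: algebra_simps)
  finally show "sum (\<lambda>S. \<theta> (?N - S)) {S\<in>Pow ?N. i \<in> S \<and> j \<in> S} = x i * x j" .
qed

lemma submodular_setfun_complement:
  assumes "submodular_setfun n f"
  shows "submodular_setfun n (\<lambda>S. f ({1..n} - S))"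
  unfolding submodular_setfun_def
proof (intro allI impI)
  fix S T :: "nat set"
  have "f (({1..n} - S) \<inter> ({1..n} - T)) + f (({1..n} - S) \<union> ({1..n} - T))
      \<le> f ({1..n} - S) + f ({1..n} - T)"
    by (intro submodular_setfunD[OF assms]) auto
  moreover have "({1..n} - S) \<inter> ({1..n} - T) = {1..n} - (S \<union> T)"
    "({1..n} - S) \<union> ({1..n} - T) = {1..n} - (S \<inter> T)" by auto
  ultimately show "f ({1..n} - S) + f ({1..n} - T) \<ge> f ({1..n} - (S \<inter> T)) + f ({1..n} - (S \<union> T))"
    by simp
qed

definition product_weight :: "'a set \<Rightarrow> ('a \<Rightarrow> real) \<Rightarrow> 'a set \<Rightarrow> real" where
  "product_weight N p X = (\<Prod>i\<in>X. p i) * (\<Prod>i\<in>N - X. 1 - p i)"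

lemma sum_product_weight_superset:
  assumes "finite N" "K \<subseteq> N"
  shows "(\<Sum>C\<in>Pow N. product_weight N p C * of_bool (K \<subseteq> C)) = prod p K"
proof -
  let ?q = "\<lambda>j. if j \<in> K then 0 else 1 - p j"
  have "(\<Sum>C\<in>Pow N. product_weight N p C * of_bool (K \<subseteq> C))
      = (\<Sum>C\<in>Pow N. (\<Prod>j\<in>C. p j) * (\<Prod>j\<in>N - C. ?q j))"
  proof (rule sum.cong[OF refl])
    fix C assume "C \<in> Pow N"
    show "product_weight N p C * of_bool (K \<subseteq> C) = (\<Prod>j\<in>C. p j) * (\<Prod>j\<in>N - C. ?q j)"
    proof (cases "K \<subseteq> C")
      case True
      then have "(\<Prod>j\<in>N - C. ?q j) = (\<Prod>j\<in>N - C. 1 - p j)"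
        by (intro prod.cong) auto
      then show ?thesis using True by (simp add: product_weight_def)
    next
      case False
      then have "(\<Prod>j\<in>N - C. ?q j) = 0"
        using assms by (intro prod_zero) auto
      then show ?thesis using False by simp
    qed
  qed
  also have "\<dots> = (\<Prod>j\<in>N. p j + ?q j)"
    by (rule prod_add[OF assms(1), symmetric])
  also have "\<dots> = (\<Prod>j\<in>N. if j \<in> K then p j else 1)"
    by (intro prod.cong) auto
  also have "\<dots> = prod p K"
    using assms by (simp add: prod.If_cases Int_absorb1)
  finally show ?thesis .
qed

text \<open>
  The product part contributes \<open>b z\<^sub>i\<close> and \<open>z\<^sub>i z\<^sub>j\<close> to the first and second moments, the
  singletons only \<open>(1 - b) z\<^sub>i\<close> to the first. When \<open>b = 0\<close> all \<open>z\<^sub>i\<close> vanish, so the junk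
  quotients \<open>z\<^sub>i / 0 = 0\<close> are harmless.
\<close>
definition mixture :: "'a set \<Rightarrow> real \<Rightarrow> ('a \<Rightarrow> real) \<Rightarrow> 'a set \<Rightarrow> real" where
  "mixture N b z C = b\<^sup>2 * product_weight N (\<lambda>i. z i / b) C
     + (\<Sum>i\<in>N. if C = {i} then (1 - b) * z i else 0)
     + (if C = {} then 1 - b\<^sup>2 - (1 - b) * sum z N else 0)"

lemma sum_mixture_mult:
  assumes "finite N"
  shows "(\<Sum>C\<in>Pow N. mixture N b z C * g C) =
     b\<^sup>2 * (\<Sum>C\<in>Pow N. product_weight N (\<lambda>i. z i / b) C * g C)
     + (\<Sum>i\<in>N. (1 - b) * z i * g {i}) + (1 - b\<^sup>2 - (1 - b) * sum z N) * g {}"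
proof -
  have singletons: "(\<Sum>C\<in>Pow N. (\<Sum>i\<in>N. if C = {i} then (1 - b) * z i else 0) * g C)
      = (\<Sum>i\<in>N. (1 - b) * z i * g {i})"
  proof -
    have "(\<Sum>C\<in>Pow N. (\<Sum>i\<in>N. if C = {i} then (1 - b) * z i else 0) * g C)
        = (\<Sum>i\<in>N. \<Sum>C\<in>Pow N. if C = {i} then (1 - b) * z i * g C else 0)"
      by (subst sum.swap) (auto simp: sum_distrib_right intro!: sum.cong)
    also have "\<dots> = (\<Sum>i\<in>N. (1 - b) * z i * g {i})"
      using assms by (intro sum.cong refl) (simp add: sum.delta)
    finally show ?thesis .
  qed
  have "(\<Sum>C\<in>Pow N. (if C = {} then 1 - b\<^sup>2 - (1 - b) * sum z N else 0) * g C)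
      = (\<Sum>C\<in>Pow N. if C = {} then (1 - b\<^sup>2 - (1 - b) * sum z N) * g C else 0)"
    by (intro sum.cong) auto
  then have empty: "(\<Sum>C\<in>Pow N. (if C = {} then 1 - b\<^sup>2 - (1 - b) * sum z N else 0) * g C)
      = (1 - b\<^sup>2 - (1 - b) * sum z N) * g {}"
    using assms by (simp add: sum.delta)
  show ?thesis
    unfolding mixture_def distrib_right sum.distrib singletons empty
    by (simp add: sum_distrib_left mult.assoc)
qed

locale mixture_parameters =
  fixes N :: "'a set" and b :: real and z :: "'a \<Rightarrow> real"
  assumes finite: "finite N" and b_nonneg: "0 \<le> b" and b_le_1: "b \<le> 1"
    and z_bounds: "\<And>i. i \<in> N \<Longrightarrow> 0 \<le> z i \<and> z i \<le> b"
    and mass: "b\<^sup>2 + (1 - b) * sum z N \<le> 1"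
begin

lemma product_weight_nonneg: "C \<subseteq> N \<Longrightarrow> 0 \<le> product_weight N (\<lambda>i. z i / b) C"
  using z_bounds b_nonneg unfolding product_weight_def
  by (intro mult_nonneg_nonneg prod_nonneg) (auto simp: divide_le_eq)

lemma mixture_nonneg: "C \<subseteq> N \<Longrightarrow> 0 \<le> mixture N b z C"
  unfolding mixture_def using product_weight_nonneg[of C] z_bounds b_le_1 mass
  by (intro add_nonneg_nonneg mult_nonneg_nonneg sum_nonneg) auto

lemma sum_mixture_superset:
  assumes "K \<subseteq> N"
  shows "(\<Sum>C\<in>Pow N. mixture N b z C * of_bool (K \<subseteq> C)) =
     b\<^sup>2 * prod (\<lambda>i. z i / b) K + (\<Sum>i\<in>N. (1 - b) * z i * of_bool (K \<subseteq> {i}))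
     + (1 - b\<^sup>2 - (1 - b) * sum z N) * of_bool (K = {})"
  using sum_mixture_mult[OF finite, of b z "\<lambda>C. of_bool (K \<subseteq> C)"]
    sum_product_weight_superset[OF finite assms]
  by simp

lemma sum_mixture: "sum (mixture N b z) (Pow N) = 1"
  using sum_mixture_superset[of "{}"] by (simp add: sum_distrib_left)

lemma sum_mixture_member:
  assumes "i \<in> N"
  shows "(\<Sum>C\<in>Pow N. mixture N b z C * of_bool (i \<in> C)) = z i"
proof -
  have "(\<Sum>j\<in>N. (1 - b) * z j * of_bool ({i} \<subseteq> {j})) = (1 - b) * z i"
    using assms finite by (simp add: sum.delta' of_bool_def if_distrib cong: if_cong)
  moreover have "b\<^sup>2 * (z i / b) = b * z i"
    using z_bounds[OF assms] by (cases "b = 0") (auto simp: power2_eq_square)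
  ultimately show ?thesis
    using sum_mixture_superset[of "{i}"] assms by (simp add: algebra_simps)
qed

lemma mixture_value_ge:
  assumes "\<And>C. C \<subseteq> N \<Longrightarrow> c \<le> g C"
  shows "b\<^sup>2 * c + (1 - b\<^sup>2) * g {} + (1 - b) * (\<Sum>i\<in>N. z i * (g {i} - g {}))
    \<le> (\<Sum>C\<in>Pow N. mixture N b z C * g C)"
proof -
  let ?p = "product_weight N (\<lambda>i. z i / b)"
  have "c = (\<Sum>C\<in>Pow N. ?p C * c)"
    using sum_product_weight_superset[OF finite, of "{}" "\<lambda>i. z i / b"]
    by (simp add: sum_distrib_right[symmetric])
  also have "\<dots> \<le> (\<Sum>C\<in>Pow N. ?p C * g C)"
    using assms product_weight_nonneg by (intro sum_mono mult_left_mono) auto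
  finally have "b\<^sup>2 * c \<le> b\<^sup>2 * (\<Sum>C\<in>Pow N. ?p C * g C)"
    by (simp add: mult_left_mono)
  moreover have "(1 - b) * (\<Sum>i\<in>N. z i * (g {i} - g {}))
      = (\<Sum>i\<in>N. (1 - b) * z i * g {i}) - (1 - b) * sum z N * g {}"
    by (simp add: sum_distrib_left sum_distrib_right sum_subtractf algebra_simps)
  moreover have "(1 - b\<^sup>2 - (1 - b) * sum z N) * g {} = (1 - b\<^sup>2) * g {} - (1 - b) * sum z N * g {}"
    by (simp add: algebra_simps)
  ultimately show ?thesis
    unfolding sum_mixture_mult[OF finite] by linarith
qed

lemma sum_mixture_pair:
  assumes "i \<in> N" "j \<in> N" "i \<noteq> j"
  shows "(\<Sum>C\<in>Pow N. mixture N b z C * of_bool (i \<in> C \<and> j \<in> C)) = z i * z j"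
proof -
  have "(\<Sum>k\<in>N. (1 - b) * z k * of_bool ({i, j} \<subseteq> {k})) = 0"
    using assms by (intro sum.neutral) auto
  moreover have "b\<^sup>2 * (z i / b * (z j / b)) = z i * z j"
    using z_bounds[OF assms(1)] by (cases "b = 0") (auto simp: power2_eq_square)
  ultimately show ?thesis
    using sum_mixture_superset[of "{i, j}"] assms by simp
qed

end

lemma mixture_parametersI:
  assumes "finite N" "0 \<le> b" "b \<le> 1" "\<And>i. i \<in> N \<Longrightarrow> 0 \<le> z i \<and> z i \<le> b"
    and "sum z N \<le> 1 + b"
  shows "mixture_parameters N b z"
proof
  have "(1 - b) * sum z N \<le> (1 - b) * (1 + b)"
    using assms by (intro mult_left_mono) auto
  then show "b\<^sup>2 + (1 - b) * sum z N \<le> 1"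
    by (simp add: power2_eq_square algebra_simps)
qed (use assms in auto)

lemma mixture_pairwise_feasible:
  assumes "mixture_parameters {1..n} b z"
  shows "pairwise_feasible n z (mixture {1..n} b z)"
proof -
  interpret mixture_parameters "{1..n}" b z by (fact assms)
  show ?thesis
    unfolding pairwise_feasible_def concave_feasible_def
    using mixture_nonneg sum_mixture sum_mixture_member sum_mixture_pair by (auto simp: Int_def)
qed

lemma ratio_certificateI:
  assumes sub: "submodular_setfun n h" and "pairwise_feasible n z \<theta>'"
    and gain: "h {} + (\<Sum>i\<in>{1..n}. z i * (h {i} - h {})) \<le> 4/3 * L"
    and lower: "L \<le> expected_value n \<theta>' h"
  shows "ratio_certificate n h z \<theta>'"
  unfolding ratio_certificate_def
proof (intro conjI allI impI)
  show "pairwise_feasible n z \<theta>'" by fact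
  fix \<theta> assume "concave_feasible n z \<theta>"
  then have "expected_value n \<theta> h \<le> h {} + (\<Sum>i\<in>{1..n}. z i * (h {i} - h {}))"
    by (rule expected_value_le_singleton_bound[OF sub])
  also have "\<dots> \<le> 4/3 * L" by (fact gain)
  also have "\<dots> \<le> 4/3 * expected_value n \<theta>' h" using lower by simp
  finally show "expected_value n \<theta> h \<le> 4/3 * expected_value n \<theta>' h" .
qed

lemma ratio_certificate_monotone:
  assumes sub: "submodular_setfun n h" and mono: "\<And>C. C \<subseteq> {1..n} \<Longrightarrow> h {} \<le> h C"
    and "0 \<le> h {}" and "0 \<le> b" "b \<le> 1/4"
    and z: "\<And>i. i \<in> {1..n} \<Longrightarrow> 0 \<le> z i \<and> z i \<le> b" and "sum z {1..n} \<le> 1 + b"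
  shows "ratio_certificate n h z (mixture {1..n} b z)"
proof -
  have params: "mixture_parameters {1..n} b z"
    by (rule mixture_parametersI) (use assms in auto)
  define D where "D = (\<Sum>i\<in>{1..n}. z i * (h {i} - h {}))"
  have "0 \<le> D" unfolding D_def
    using z mono by (intro sum_nonneg mult_nonneg_nonneg) auto
  moreover have "b * D \<le> 1/4 * D"
    using \<open>0 \<le> D\<close> assms by (intro mult_right_mono) auto
  ultimately have "h {} + D \<le> 4/3 * (h {} + (1 - b) * D)"
    using assms by (simp add: algebra_simps)
  moreover have "h {} + (1 - b) * D \<le> expected_value n (mixture {1..n} b z) h"
    using mixture_parameters.mixture_value_ge[OF params, of "h {}" h] mono
    by (simp add: D_def algebra_simps)
  ultimately show ?thesis
    unfolding D_def by (rule ratio_certificateI[OF sub mixture_pairwise_feasible[OF params]])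
qed

lemma ratio_certificate_antitone:
  assumes sub: "submodular_setfun n h" and nonneg: "\<And>C. C \<subseteq> {1..n} \<Longrightarrow> 0 \<le> h C"
    and anti: "\<And>i. i \<in> {1..n} \<Longrightarrow> h {i} \<le> h {}" and "0 \<le> b" "b \<le> 1/4"
    and z: "\<And>i. i \<in> {1..n} \<Longrightarrow> 0 \<le> z i \<and> z i \<le> b" and "sum z {1..n} \<le> 1 + b"
  shows "ratio_certificate n h z (mixture {1..n} b z)"
proof -
  have params: "mixture_parameters {1..n} b z"
    by (rule mixture_parametersI) (use assms in auto)
  define D where "D = (\<Sum>i\<in>{1..n}. z i * (h {i} - h {}))"
  have "D \<le> 0" unfolding D_def
    using z anti by (intro sum_nonpos mult_nonneg_nonpos) auto
  have "- h {} \<le> h {1..n} - h {}"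
    using nonneg by simp
  also have "\<dots> \<le> (\<Sum>i\<in>{1..n}. h {i} - h {})"
    using submodular_le_sum_singletons[OF sub, of "{1..n}"] by simp
  also have "\<dots> \<le> D" unfolding D_def
  proof (rule sum_mono)
    fix i assume i: "i \<in> {1..n}"
    have "z i \<le> 1" using z[OF i] assms by simp
    then have "(1 - z i) * (h {i} - h {}) \<le> 0"
      using anti[OF i] by (intro mult_nonneg_nonpos) auto
    then show "h {i} - h {} \<le> z i * (h {i} - h {})"
      by (simp add: algebra_simps)
  qed
  finally have "(1 - 4 * b) * (- h {}) \<le> (1 - 4 * b) * D"
    using assms by (intro mult_left_mono) auto
  moreover have "0 \<le> b * (1 - b) * h {}"
    using assms nonneg[of "{}"] by (intro mult_nonneg_nonneg) auto
  ultimately have "h {} + D \<le> 4/3 * ((1 - b\<^sup>2) * h {} + (1 - b) * D)"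
    by (simp add: algebra_simps power2_eq_square)
  moreover have "(1 - b\<^sup>2) * h {} + (1 - b) * D \<le> expected_value n (mixture {1..n} b z) h"
    using mixture_parameters.mixture_value_ge[OF params, of 0 h] nonneg
    by (simp add: D_def)
  ultimately show ?thesis
    unfolding D_def by (rule ratio_certificateI[OF sub mixture_pairwise_feasible[OF params]])
qed

lemma expected_value_complement:
  "expected_value n (\<lambda>S. \<theta> ({1..n} - S)) (\<lambda>S. f ({1..n} - S)) = expected_value n \<theta> f"
  using sum_Pow_complement[where N = "{1..n}" and \<theta> = "\<lambda>C. \<theta> C * f C"] by simp

lemma ratio_certificate_complement:
  assumes cert: "ratio_certificate n (\<lambda>S. f ({1..n} - S)) (\<lambda>i. 1 - x i) \<theta>'"
  shows "ratio_certificate n f x (\<lambda>S. \<theta>' ({1..n} - S))"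
  unfolding ratio_certificate_def
proof (intro conjI allI impI)
  let ?N = "{1..n}"
  show "pairwise_feasible n x (\<lambda>S. \<theta>' (?N - S))"
    using cert unfolding ratio_certificate_def by (intro pairwise_feasible_complement) simp
  fix \<theta> assume "concave_feasible n x \<theta>"
  then have "concave_feasible n (\<lambda>i. 1 - x i) (\<lambda>S. \<theta> (?N - S))"
    using concave_feasible_complement[of n "\<lambda>i. 1 - x i" \<theta>] by simp
  then have "expected_value n (\<lambda>S. \<theta> (?N - S)) (\<lambda>S. f (?N - S))
      \<le> 4/3 * expected_value n \<theta>' (\<lambda>S. f (?N - S))"
    using cert unfolding ratio_certificate_def by simp
  also have "expected_value n \<theta>' (\<lambda>S. f (?N - S))
      = expected_value n (\<lambda>S. \<theta>' (?N - (?N - S))) (\<lambda>S. f (?N - S))"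
    by (intro sum.cong) (auto simp: double_diff)
  also have "\<dots> = expected_value n (\<lambda>S. \<theta>' (?N - S)) f"
    by (rule expected_value_complement)
  finally show "expected_value n \<theta> f \<le> 4/3 * expected_value n (\<lambda>S. \<theta>' (?N - S)) f"
    by (simp only: expected_value_complement)
qed

lemma sorted_le:
  fixes x :: "nat \<Rightarrow> real"
  assumes "\<forall>i\<in>{1..<n}. x i \<le> x (i + 1)" "1 \<le> i" "i \<le> j" "j \<le> n"
  shows "x i \<le> x j"
  using lift_Suc_mono_le_ivl[of "{1..<n}" x i j] assms by auto

lemma ratio_certificate_case_i:
  assumes "n \<ge> 1" "nonneg_setfun n f" "monotone_setfun n f" "submodular_setfun n f"
    and x: "\<forall>i \<in> {1..n}. 0 \<le> x i \<and> x i \<le> 1" and sorted: "\<forall>i \<in> {1..<n}. x i \<le> x (i + 1)"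
    and "(\<Sum>i = 1..n-1. x i) \<le> 1" "x n \<le> 1/4"
  shows "ratio_certificate n f x (mixture {1..n} (x n) x)"
proof (rule ratio_certificate_monotone)
  show "\<And>i. i \<in> {1..n} \<Longrightarrow> 0 \<le> x i \<and> x i \<le> x n"
    using x sorted_le[OF sorted] by auto
  have "sum x {1..n} = sum x {1..n-1} + x n"
    using \<open>n \<ge> 1\<close> by (cases n) (auto simp: sum.cl_ivl_Suc)
  then show "sum x {1..n} \<le> 1 + x n"
    using assms by simp
qed (use assms in \<open>auto simp: nonneg_setfun_def monotone_setfun_def\<close>)

lemma ratio_certificate_case_ii:
  assumes "n \<ge> 1" "nonneg_setfun n f" "monotone_setfun n f" "submodular_setfun n f"
    and x: "\<forall>i \<in> {1..n}. 0 \<le> x i \<and> x i \<le> 1" and sorted: "\<forall>i \<in> {1..<n}. x i \<le> x (i + 1)"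
    and "(\<Sum>i = 2..n. x i) \<ge> real n - 2" "x 1 \<ge> 3/4"
  shows "ratio_certificate n f x
    (\<lambda>S. mixture {1..n} (1 - x 1) (\<lambda>i. 1 - x i) ({1..n} - S))"
proof (intro ratio_certificate_complement ratio_certificate_antitone)
  show "submodular_setfun n (\<lambda>S. f ({1..n} - S))"
    using assms by (intro submodular_setfun_complement)
  show "\<And>i. i \<in> {1..n} \<Longrightarrow> 0 \<le> 1 - x i \<and> 1 - x i \<le> 1 - x 1"
    using x sorted_le[OF sorted] by auto
  have "sum (\<lambda>i. 1 - x i) {1..n} = (1 - x 1) + sum (\<lambda>i. 1 - x i) {2..n}"
    using \<open>n \<ge> 1\<close> by (simp add: sum.atLeast_Suc_atMost numeral_2_eq_2)
  also have "sum (\<lambda>i. 1 - x i) {2..n} = (real n - 1) - sum x {2..n}"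
    using \<open>n \<ge> 1\<close> by (simp add: sum_subtractf of_nat_diff)
  finally show "sum (\<lambda>i. 1 - x i) {1..n} \<le> 1 + (1 - x 1)"
    using assms by simp
qed (use assms in \<open>auto simp: nonneg_setfun_def monotone_setfun_def\<close>)

theorem mainTheorem11:
  fixes n :: nat and f :: "nat set \<Rightarrow> real" and x :: "nat \<Rightarrow> real"
  assumes "n \<ge> 2"
    and "nonneg_setfun n f" and "monotone_setfun n f" and "submodular_setfun n f"
    and "\<forall>i \<in> {1..n}. 0 \<le> x i \<and> x i \<le> 1"
    and "\<forall>i \<in> {1..<n}. x i \<le> x (i + 1)"
    and "((\<Sum>i = 1..n-1. x i) \<le> 1 \<and> x n \<le> 1/4) \<or>
         ((\<Sum>i = 2..n. x i) \<ge> real n - 2 \<and> x 1 \<ge> 3/4)"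
  shows "(upper_pairwise_ext n f x = 0 \<longrightarrow> concave_closure n f x = 0) \<and>
         (upper_pairwise_ext n f x \<noteq> 0 \<longrightarrow>
            concave_closure n f x / upper_pairwise_ext n f x \<le> 4/3)"
proof -
  have "n \<ge> 1" using assms(1) by simp
  obtain \<theta>' where "ratio_certificate n f x \<theta>'"
    using assms(7) ratio_certificate_case_i[OF \<open>n \<ge> 1\<close> assms(2-6)]
      ratio_certificate_case_ii[OF \<open>n \<ge> 1\<close> assms(2-6)] by blast
  then show ?thesis
    using assms(2) by (intro ratio_bound_of_certificate)
qed

end
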